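(* Consider a generalized discrete preference game on a tree metric: a finite set $V$ of players, a directed graph on $V$ with nonnegative weights $w_{ij}$ on arcs $(i,j)$ (with $N_i$ the set of out-neighbours of $i$), a finite tree $\mathcal{T}$ with positive edge lengths whose node set $L$ is the strategy set and whose shortest-path metric is $d$, and for each player $i$ and node $v\in L$ a nonnegative penalty $p_i(v)$. The cost of player $i$ in profile $z=(z_i)_{i\in V}\in L^V$ is $c_i(z)=\sum_{v\in L} p_i(v)\, d(v,z_i)+\sum_{j\in N_i} w_{ij}\, d(z_i,z_j)$. Fix a root $r$ of $\mathcal{T}$ and run the following procedure (Tree Metric Algo): initially set $z_i\leftarrow r$ for every player $i$; while there exists a player $i$ and a child $v$ of $z_i$ (in $\mathcal{T}$ rooted at $r$) such that changing $z_i$ to $v$ (keeping all other strategies fixed) strictly decreases $c_i$, set $z_i\leftarrow v$ for some such pair. Then this procedure terminates (after at most $|V|\cdot|L|$ moves), and the final profile $z$ is a pure Nash equilibrium, i.e. no player can strictly decrease her cost by changing only her own strategy. In particular such a game always has a pure Nash equilibrium. *)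

theory Defs
  imports Complex_Main
begin

fun is_walk :: "('n \<times> 'n) set \<Rightarrow> 'n list \<Rightarrow> bool" where
  "is_walk E [] = False"
| "is_walk E [x] = True"
| "is_walk E (x # y # xs) = ((x, y) \<in> E \<and> is_walk E (y # xs))"

definition simple_path :: "('n \<times> 'n) set \<Rightarrow> 'n \<Rightarrow> 'n \<Rightarrow> 'n list \<Rightarrow> bool" where
  "simple_path E u v p \<longleftrightarrow> is_walk E p \<and> distinct p \<and> hd p = u \<and> last p = v"

definition weighted_tree :: "'n set \<Rightarrow> ('n \<times> 'n) set \<Rightarrow> ('n \<Rightarrow> 'n \<Rightarrow> real) \<Rightarrow> bool" where
  "weighted_tree L E len \<longleftrightarrow>
     finite L \<and> L \<noteq> {} \<and> E \<subseteq> L \<times> L \<and>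
     (\<forall>u v. (u, v) \<in> E \<longrightarrow> (v, u) \<in> E \<and> u \<noteq> v \<and> len u v > 0 \<and> len u v = len v u) \<and>
     (\<forall>u\<in>L. \<forall>v\<in>L. \<exists>!p. simple_path E u v p)"

fun path_length :: "('n \<Rightarrow> 'n \<Rightarrow> real) \<Rightarrow> 'n list \<Rightarrow> real" where
  "path_length len (x # y # xs) = len x y + path_length len (y # xs)"
| "path_length len _ = 0"

text \<open>Shortest-path metric of the tree (a shortest walk can always be taken simple).\<close>

definition tree_dist :: "('n \<times> 'n) set \<Rightarrow> ('n \<Rightarrow> 'n \<Rightarrow> real) \<Rightarrow> 'n \<Rightarrow> 'n \<Rightarrow> real" where
  "tree_dist E len u v = Min (path_length len ` {p. simple_path E u v p})"

definition tree_child :: "('n \<times> 'n) set \<Rightarrow> 'n \<Rightarrow> 'n \<Rightarrow> 'n \<Rightarrow> bool" where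
  "tree_child E r u v \<longleftrightarrow> (u, v) \<in> E \<and> (\<exists>p. simple_path E r v p \<and> u \<in> set p)"

definition game_cost ::
  "'n set \<Rightarrow> ('n \<times> 'n) set \<Rightarrow> ('n \<Rightarrow> 'n \<Rightarrow> real) \<Rightarrow> ('p \<times> 'p) set \<Rightarrow> ('p \<Rightarrow> 'p \<Rightarrow> real)
   \<Rightarrow> ('p \<Rightarrow> 'n \<Rightarrow> real) \<Rightarrow> 'p \<Rightarrow> ('p \<Rightarrow> 'n) \<Rightarrow> real" where
  "game_cost L E len A w pen i z =
     (\<Sum>v\<in>L. pen i v * tree_dist E len v (z i)) +
     (\<Sum>j\<in>{j. (i, j) \<in> A}. w i j * tree_dist E len (z i) (z j))"

definition algo_step ::
  "'p set \<Rightarrow> 'n set \<Rightarrow> ('n \<times> 'n) set \<Rightarrow> ('n \<Rightarrow> 'n \<Rightarrow> real) \<Rightarrow> ('p \<times> 'p) set \<Rightarrow> ('p \<Rightarrow> 'p \<Rightarrow> real)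
   \<Rightarrow> ('p \<Rightarrow> 'n \<Rightarrow> real) \<Rightarrow> 'n \<Rightarrow> ('p \<Rightarrow> 'n) \<Rightarrow> ('p \<Rightarrow> 'n) \<Rightarrow> bool" where
  "algo_step V L E len A w pen r z z' \<longleftrightarrow>
     (\<exists>i\<in>V. \<exists>v. tree_child E r (z i) v \<and>
        game_cost L E len A w pen i (z(i := v)) < game_cost L E len A w pen i z \<and>
        z' = z(i := v))"

definition pure_nash ::
  "'p set \<Rightarrow> 'n set \<Rightarrow> ('n \<times> 'n) set \<Rightarrow> ('n \<Rightarrow> 'n \<Rightarrow> real) \<Rightarrow> ('p \<times> 'p) set \<Rightarrow> ('p \<Rightarrow> 'p \<Rightarrow> real)
   \<Rightarrow> ('p \<Rightarrow> 'n \<Rightarrow> real) \<Rightarrow> ('p \<Rightarrow> 'n) \<Rightarrow> bool" where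
  "pure_nash V L E len A w pen z \<longleftrightarrow>
     (\<forall>i\<in>V. z i \<in> L) \<and>
     (\<forall>i\<in>V. \<forall>x\<in>L. game_cost L E len A w pen i z \<le> game_cost L E len A w pen i (z(i := x)))"

end

theory Submission
  imports Defs
begin

(*
  With the strategies of the others fixed, the cost of player i at node x is a weighted
  1-median objective on the tree: every node v carries mass pen i v and every out-neighbour j
  contributes mass w i j at z j.  Moving from u to a child c changes this objective by
  len u c * (total mass - 2 * mass of the subtree below c), so the move is improving exactly
  when that subtree carries more than half of the mass; and a node whose subtree carries at
  least half of the mass, while no child subtree carries more than half, is a minimiser.

  Throughout the algorithm every player sits at a node whose subtree carries at least half of
  her mass: this holds at the root, a player's own move restores it, and the moves of the
  others only push mass further down the tree.  Each move increases the total depth of the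
  profile, which is at most |V| * |L|; when no move is left, the invariant together with the
  child condition makes every player a best responder.
*)

lemma is_walk_append:
  "is_walk E (xs @ a # ys) \<longleftrightarrow> is_walk E (xs @ [a]) \<and> is_walk E (a # ys)"
  by (induction xs rule: induct_list012) auto

lemma path_length_append:
  "path_length len (xs @ a # ys) = path_length len (xs @ [a]) + path_length len (a # ys)"
  by (induction xs rule: induct_list012) auto

lemma is_walk_rev:
  assumes "sym E" and "is_walk E p"
  shows "is_walk E (rev p)"
  using assms(2)
proof (induction p rule: induct_list012)
  case (3 x y xs)
  then show ?case
    using is_walk_append[of E "rev xs" y "[x]"] symD[OF assms(1)] by auto
qed auto

lemma path_length_rev:
  assumes "\<And>u v. (u, v) \<in> E \<Longrightarrow> len v u = len u v" and "is_walk E p"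
  shows "path_length len (rev p) = path_length len p"
  using assms(2)
proof (induction p rule: induct_list012)
  case (3 x y xs)
  then have "len y x = len x y"
    using assms(1) by simp
  then show ?case
    using 3 path_length_append[of len "rev xs" y "[x]"] by simp
qed auto

lemma path_length_nonneg:
  assumes "\<And>u v. (u, v) \<in> E \<Longrightarrow> 0 \<le> len u v" and "is_walk E p"
  shows "0 \<le> path_length len p"
  using assms(2) by (induction p rule: induct_list012) (auto intro: add_nonneg_nonneg assms(1))

lemma is_walk_subset:
  "E \<subseteq> L \<times> L \<Longrightarrow> is_walk E p \<Longrightarrow> hd p \<in> L \<Longrightarrow> set p \<subseteq> L"
  by (induction p rule: induct_list012) auto

lemma common_prefix_split:
  "p \<noteq> [] \<Longrightarrow> q \<noteq> [] \<Longrightarrow> hd p = hd q \<Longrightarrow>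
    \<exists>A a P Q. p = A @ a # P \<and> q = A @ a # Q \<and> (P = [] \<or> Q = [] \<or> hd P \<noteq> hd Q)"
proof (induction p arbitrary: q)
  case (Cons x p)
  then obtain q' where q: "q = x # q'"
    by (cases q) auto
  show ?case
  proof (cases "p = [] \<or> q' = [] \<or> hd p \<noteq> hd q'")
    case True
    then show ?thesis
      using q by (intro exI[of _ "[]"]) auto
  next
    case False
    then obtain A a P Q where "p = A @ a # P" "q' = A @ a # Q" "P = [] \<or> Q = [] \<or> hd P \<noteq> hd Q"
      using Cons.IH[of q'] by auto
    then show ?thesis
      using q by (intro exI[of _ "x # A"]) auto
  qed
qed simp

section \<open>Paths and distances in a weighted tree\<close>

locale tree =
  fixes L :: "'n set" and E :: "('n \<times> 'n) set" and len :: "'n \<Rightarrow> 'n \<Rightarrow> real"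
  assumes weighted_tree: "weighted_tree L E len"
begin

abbreviation d :: "'n \<Rightarrow> 'n \<Rightarrow> real" where
  "d \<equiv> tree_dist E len"

lemma finite_nodes: "finite L"
  and edges_subset: "E \<subseteq> L \<times> L"
  and edge_neq: "(u, v) \<in> E \<Longrightarrow> u \<noteq> v"
  and edge_len_pos: "(u, v) \<in> E \<Longrightarrow> 0 < len u v"
  and edge_len_sym: "(u, v) \<in> E \<Longrightarrow> len v u = len u v"
  and unique_simple_path: "u \<in> L \<Longrightarrow> v \<in> L \<Longrightarrow> \<exists>!p. simple_path E u v p"
  using weighted_tree unfolding weighted_tree_def by auto

lemma sym_edges: "sym E"
  using weighted_tree unfolding weighted_tree_def by (auto intro: symI)

definition tree_path :: "'n \<Rightarrow> 'n \<Rightarrow> 'n list" where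
  "tree_path u v = (THE p. simple_path E u v p)"

lemma simple_path_nodes:
  assumes "simple_path E u v p" and "u \<in> L"
  shows "p \<noteq> []" and "set p \<subseteq> L" and "v \<in> L"
proof -
  show "p \<noteq> []"
    using assms(1) unfolding simple_path_def by auto
  then show "set p \<subseteq> L"
    using assms is_walk_subset[OF edges_subset] unfolding simple_path_def by blast
  then show "v \<in> L"
    using assms(1) \<open>p \<noteq> []\<close> unfolding simple_path_def by auto
qed

lemma simple_path_tree_path: "u \<in> L \<Longrightarrow> v \<in> L \<Longrightarrow> simple_path E u v (tree_path u v)"
  unfolding tree_path_def using unique_simple_path by (rule theI')

lemma tree_path_unique: "u \<in> L \<Longrightarrow> simple_path E u v p \<Longrightarrow> tree_path u v = p"
  using simple_path_tree_path unique_simple_path simple_path_nodes(3) by blast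

lemma tree_pathD:
  assumes "u \<in> L" "v \<in> L"
  shows "is_walk E (tree_path u v)" "distinct (tree_path u v)"
    "hd (tree_path u v) = u" "last (tree_path u v) = v"
    "tree_path u v \<noteq> []" "set (tree_path u v) \<subseteq> L"
  using simple_path_tree_path[OF assms] simple_path_nodes[OF _ assms(1)]
  unfolding simple_path_def by auto

lemma tree_dist_eq_path_length:
  assumes "u \<in> L" "v \<in> L"
  shows "d u v = path_length len (tree_path u v)"
proof -
  have "{p. simple_path E u v p} = {tree_path u v}"
    using simple_path_tree_path[OF assms] tree_path_unique[OF assms(1)] by blast
  then show ?thesis
    unfolding tree_dist_def by simp
qed

lemma tree_path_refl: "u \<in> L \<Longrightarrow> tree_path u u = [u]"
  by (rule tree_path_unique) (auto simp: simple_path_def)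

lemma tree_path_sym:
  assumes "u \<in> L" "v \<in> L"
  shows "tree_path v u = rev (tree_path u v)"
  by (rule tree_path_unique[OF assms(2)])
    (use tree_pathD[OF assms] is_walk_rev[OF sym_edges] in \<open>simp add: simple_path_def hd_rev last_rev\<close>)

lemma tree_path_edge: "(u, v) \<in> E \<Longrightarrow> tree_path u v = [u, v]"
  using edges_subset edge_neq by (intro tree_path_unique) (auto simp: simple_path_def)

lemma tree_path_split:
  assumes "u \<in> L" "v \<in> L" and split: "tree_path u v = xs @ a # ys"
  shows "a \<in> L" "tree_path u a = xs @ [a]" "tree_path a v = a # ys"
proof -
  note path = tree_pathD[OF assms(1,2)]
  show a: "a \<in> L"
    using path(6) split by auto
  show "tree_path u a = xs @ [a]"
    using path split is_walk_append[of E xs a ys]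
    by (intro tree_path_unique[OF assms(1)]) (cases xs, auto simp: simple_path_def)
  show "tree_path a v = a # ys"
    using path split is_walk_append[of E xs a ys]
    by (intro tree_path_unique[OF a]) (auto simp: simple_path_def)
qed

lemma tree_path_fork:
  assumes "s \<in> L" "y \<in> L" "x \<in> L"
  shows "\<exists>A a P Q. tree_path s y = A @ a # P \<and> tree_path s x = A @ a # Q \<and>
    tree_path y x = rev P @ a # Q"
proof -
  note to_y = tree_pathD[OF assms(1,2)] and to_x = tree_pathD[OF assms(1,3)]
  obtain A a P Q where y: "tree_path s y = A @ a # P" and x: "tree_path s x = A @ a # Q"
    and branch: "P = [] \<or> Q = [] \<or> hd P \<noteq> hd Q"
    using common_prefix_split[of "tree_path s y" "tree_path s x"] to_y to_x by auto
  have disjoint: "set P \<inter> set Q = {}"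
  proof (rule ccontr)
    assume "set P \<inter> set Q \<noteq> {}"
    then obtain b P1 P2 Q1 Q2 where "P = P1 @ b # P2" "Q = Q1 @ b # Q2"
      by (metis disjoint_iff split_list)
    moreover from this have "tree_path s b = (A @ a # P1) @ [b]" "tree_path s b = (A @ a # Q1) @ [b]"
      using tree_path_split(2)[OF assms(1,2), of "A @ a # P1"]
        tree_path_split(2)[OF assms(1,3), of "A @ a # Q1"] x y by simp_all
    ultimately show False
      using branch by (cases P1) auto
  qed
  have "is_walk E (a # P)" "is_walk E (a # Q)"
    using to_y(1) to_x(1) x y is_walk_append by metis+
  then have "is_walk E (rev P @ a # Q)"
    using is_walk_rev[OF sym_edges, of "a # P"] is_walk_append by (metis rev.simps(2))
  moreover have "distinct (rev P @ a # Q)"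
    using to_y(2) to_x(2) x y disjoint by auto
  moreover have "hd (rev P @ a # Q) = y"
    using to_y(4) y by (cases P rule: rev_cases) auto
  moreover have "last (rev P @ a # Q) = x"
    using to_x(4) x by simp
  ultimately have "tree_path y x = rev P @ a # Q"
    by (intro tree_path_unique[OF assms(2)]) (simp add: simple_path_def)
  then show ?thesis
    using x y by blast
qed

lemma tree_dist_nonneg: "u \<in> L \<Longrightarrow> v \<in> L \<Longrightarrow> 0 \<le> d u v"
  using tree_dist_eq_path_length tree_pathD(1) path_length_nonneg edge_len_pos
  by (metis less_imp_le)

lemma tree_dist_refl: "u \<in> L \<Longrightarrow> d u u = 0"
  using tree_dist_eq_path_length tree_path_refl by simp

lemma tree_dist_sym:
  assumes "u \<in> L" "v \<in> L"
  shows "d v u = d u v"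
  using tree_dist_eq_path_length[OF assms] tree_dist_eq_path_length[OF assms(2,1)]
    tree_path_sym[OF assms] path_length_rev[OF edge_len_sym tree_pathD(1)[OF assms]]
  by simp

lemma tree_dist_edge: "(u, v) \<in> E \<Longrightarrow> d u v = len u v"
  using edges_subset tree_dist_eq_path_length tree_path_edge by auto

lemma tree_dist_split:
  assumes "u \<in> L" "v \<in> L" "a \<in> set (tree_path u v)"
  shows "d u v = d u a + d a v"
proof -
  obtain xs ys where split: "tree_path u v = xs @ a # ys"
    using assms(3) split_list by metis
  show ?thesis
    using tree_path_split[OF assms(1,2) split] tree_dist_eq_path_length assms split
      path_length_append by simp
qed

lemma tree_dist_triangle:
  assumes "y \<in> L" "x \<in> L" "s \<in> L"
  shows "d y x \<le> d y s + d s x"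
proof -
  obtain A a P Q where "tree_path s y = A @ a # P" "tree_path s x = A @ a # Q"
    "tree_path y x = rev P @ a # Q"
    using tree_path_fork[OF assms(3,1,2)] by blast
  moreover have "a \<in> L"
    using tree_pathD(6)[OF assms(3,1)] calculation by auto
  ultimately show ?thesis
    using tree_dist_split[OF assms(1,2), of a] tree_dist_split[OF assms(3,1), of a]
      tree_dist_split[OF assms(3,2), of a] tree_dist_sym[OF assms(1) \<open>a \<in> L\<close>]
      tree_dist_sym[OF assms(1,3)] tree_dist_nonneg[OF assms(3) \<open>a \<in> L\<close>]
    by simp
qed

end

section \<open>Subtrees of a rooted tree\<close>

locale rooted_tree = tree L E len
  for L :: "'n set" and E len +
  fixes r :: 'n
  assumes root_node: "r \<in> L"
begin

definition subtree :: "'n \<Rightarrow> 'n set" where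
  "subtree q = {u \<in> L. q \<in> set (tree_path r u)}"

lemma tree_child_root_path:
  assumes "tree_child E r u c"
  shows "u \<in> L" "c \<in> L" "tree_path r c = tree_path r u @ [c]"
proof -
  obtain p where edge: "(u, c) \<in> E" and p: "simple_path E r c p" "u \<in> set p"
    using assms unfolding tree_child_def by blast
  show "u \<in> L" "c \<in> L"
    using edge edges_subset by auto
  have path: "tree_path r c = p"
    using tree_path_unique[OF root_node p(1)] .
  obtain xs ys where split: "p = xs @ u # ys"
    using p(2) split_list by metis
  have "tree_path r u = xs @ [u]" "tree_path u c = u # ys"
    using tree_path_split[OF root_node \<open>c \<in> L\<close>, of xs u ys] path split by auto
  then show "tree_path r c = tree_path r u @ [c]"
    using tree_path_edge[OF edge] path split by simp
qed

lemma subtree_root: "subtree r = L"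
  using tree_pathD(3,5)[OF root_node] hd_in_set unfolding subtree_def by fastforce

lemma tree_child_in_subtree: "tree_child E r u c \<Longrightarrow> u \<in> subtree q \<Longrightarrow> c \<in> subtree q"
  using tree_child_root_path unfolding subtree_def by auto

lemma parent_notin_subtree:
  assumes "tree_child E r u c"
  shows "u \<notin> subtree c"
proof -
  have "distinct (tree_path r u @ [c])"
    using tree_child_root_path[OF assms] tree_pathD(2)[OF root_node] by metis
  then show ?thesis
    unfolding subtree_def by auto
qed

lemma length_root_path_le: "u \<in> L \<Longrightarrow> length (tree_path r u) \<le> card L"
  using tree_pathD[OF root_node] finite_nodes by (metis card_mono distinct_card)

lemma tree_path_leaves_subtree:
  assumes "y \<in> subtree q" "x \<in> L" "x \<notin> subtree q"
  shows "q \<in> set (tree_path y x)"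
proof -
  have "y \<in> L" "q \<in> set (tree_path r y)" "q \<notin> set (tree_path r x)"
    using assms unfolding subtree_def by auto
  then show ?thesis
    using tree_path_fork[OF root_node \<open>y \<in> L\<close> assms(2)] by auto
qed

lemma tree_path_enters_subtree_at_child:
  assumes child: "tree_child E r u c" and "y \<in> L" "y \<notin> subtree c"
  shows "u \<in> set (tree_path y c)"
proof -
  note root_path = tree_child_root_path[OF child]
  obtain A a P Q where y: "tree_path r y = A @ a # P" and c: "tree_path r c = A @ a # Q"
    and yc: "tree_path y c = rev P @ a # Q"
    using tree_path_fork[OF root_node assms(2) root_path(2)] by blast
  have "c \<notin> set (A @ [a])"
    using assms(2,3) y unfolding subtree_def by auto
  then obtain Q' where "Q = Q' @ [c]"
    using c root_path(3) by (cases Q rule: rev_cases) auto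
  then have "tree_path r u = A @ a # Q'"
    using c root_path(3) by simp
  then have "u \<in> set (a # Q')"
    using tree_pathD(4)[OF root_node root_path(1)] last_in_set by (metis last_appendR list.distinct(1))
  then show ?thesis
    using yc \<open>Q = Q' @ [c]\<close> by auto
qed

lemma subtree_descendant:
  assumes "x \<in> subtree u" "x \<noteq> u"
  shows "\<exists>c. tree_child E r u c \<and> x \<in> subtree c"
proof -
  have x: "x \<in> L" and "u \<in> set (tree_path r x)"
    using assms unfolding subtree_def by auto
  then obtain xs ys where split: "tree_path r x = xs @ u # ys"
    using split_list by metis
  with assms(2) obtain c ys' where "ys = c # ys'"
    using tree_pathD(4)[OF root_node x] by (cases ys) auto
  then have split': "tree_path r x = (xs @ [u]) @ c # ys'"
    using split by simp
  have "u \<in> L"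
    using tree_path_split(1)[OF root_node x split] .
  have "is_walk E (u # c # ys')"
    using tree_pathD(1)[OF \<open>u \<in> L\<close> x] tree_path_split(3)[OF root_node x split] \<open>ys = c # ys'\<close>
    by simp
  then have "(u, c) \<in> E"
    by simp
  moreover have "tree_path r c = xs @ [u, c]" "c \<in> L"
    using tree_path_split(1,2)[OF root_node x split'] by simp_all
  ultimately have "tree_child E r u c"
    unfolding tree_child_def using simple_path_tree_path[OF root_node] by fastforce
  moreover have "x \<in> subtree c"
    using x split' unfolding subtree_def by auto
  ultimately show ?thesis
    by blast
qed

lemma tree_dist_child_diff:
  assumes child: "tree_child E r u c" and "y \<in> L"
  shows "d y c - d y u = (if y \<in> subtree c then - len u c else len u c)"
proof -
  note nodes = tree_child_root_path(1,2)[OF child]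
  have edge: "(u, c) \<in> E"
    using child unfolding tree_child_def by simp
  show ?thesis
  proof (cases "y \<in> subtree c")
    case True
    then have "d y u = d y c + d c u"
      using tree_dist_split[OF assms(2) nodes(1)]
        tree_path_leaves_subtree[OF True nodes(1) parent_notin_subtree[OF child]] by simp
    then show ?thesis
      using True tree_dist_edge[OF edge] tree_dist_sym[OF nodes] by simp
  next
    case False
    then have "d y c = d y u + d u c"
      using tree_dist_split[OF assms(2) nodes(2)]
        tree_path_enters_subtree_at_child[OF child assms(2)] by simp
    then show ?thesis
      using False tree_dist_edge[OF edge] by simp
  qed
qed

lemma tree_dist_descendant_diff:
  assumes child: "tree_child E r u c" and x: "x \<in> subtree c" and "y \<in> L"
  shows "(if y \<in> subtree c then - d u x else d u x) \<le> d y x - d y u"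
proof -
  note nodes = tree_child_root_path(1,2)[OF child]
  have "x \<in> L"
    using x unfolding subtree_def by simp
  show ?thesis
  proof (cases "y \<in> subtree c")
    case True
    then show ?thesis
      using tree_dist_triangle[OF assms(3) nodes(1) \<open>x \<in> L\<close>] tree_dist_sym[OF \<open>x \<in> L\<close> nodes(1)]
      by simp
  next
    case False
    have "d x y = d x c + d c y"
      using tree_dist_split[OF \<open>x \<in> L\<close> assms(3)] tree_path_leaves_subtree[OF x assms(3) False]
      by simp
    moreover have "d y c = d y u + d u c"
      using tree_dist_split[OF assms(3) nodes(2)]
        tree_path_enters_subtree_at_child[OF child assms(3) False] by simp
    moreover have "d x u = d x c + d c u"
      using tree_dist_split[OF \<open>x \<in> L\<close> nodes(1)]
        tree_path_leaves_subtree[OF x nodes(1) parent_notin_subtree[OF child]] by simp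
    ultimately show ?thesis
      using False tree_dist_sym[OF \<open>x \<in> L\<close> assms(3)] tree_dist_sym[OF nodes(2) assms(3)]
        tree_dist_sym[OF nodes] tree_dist_sym[OF \<open>x \<in> L\<close> nodes(1)]
      by simp
  qed
qed

lemma tree_dist_outside_diff:
  assumes "u \<in> L" "x \<in> L" "x \<notin> subtree u" "y \<in> L"
  shows "(if y \<in> subtree u then d u x else - d u x) \<le> d y x - d y u"
proof (cases "y \<in> subtree u")
  case True
  then show ?thesis
    using tree_dist_split[OF assms(4,2)] tree_path_leaves_subtree[OF True assms(2,3)] by simp
next
  case False
  then show ?thesis
    using tree_dist_triangle[OF assms(4,1,2)] tree_dist_sym[OF assms(2,1)] by simp
qed

end

section \<open>Weighted distance sums and medians\<close>

definition weight_in :: "'k set \<Rightarrow> ('k \<Rightarrow> real) \<Rightarrow> ('k \<Rightarrow> 'n) \<Rightarrow> 'n set \<Rightarrow> real" where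
  "weight_in K m pt S = (\<Sum>k\<in>K. if pt k \<in> S then m k else 0)"

lemma sum_signed_weights:
  "(\<Sum>k\<in>K. m k * (if pt k \<in> S then - D else D)) = D * (sum m K - 2 * weight_in K m pt S)"
proof -
  have "m k * (if pt k \<in> S then - D else D) = D * m k - 2 * (D * (if pt k \<in> S then m k else 0))"
    for k by auto
  then show ?thesis
    by (simp add: weight_in_def sum_subtractf sum_distrib_left[symmetric] right_diff_distrib)
qed

lemma sum_signed_weights_le:
  assumes "\<And>k. k \<in> K \<Longrightarrow> 0 \<le> m k" and "\<And>k. k \<in> K \<Longrightarrow> (if pt k \<in> S then - D else D) \<le> g k"
  shows "D * (sum m K - 2 * weight_in K m pt S) \<le> (\<Sum>k\<in>K. m k * g k)"
proof -
  have "(\<Sum>k\<in>K. m k * (if pt k \<in> S then - D else D)) \<le> (\<Sum>k\<in>K. m k * g k)"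
    using assms by (intro sum_mono mult_left_mono) auto
  then show ?thesis
    by (simp add: sum_signed_weights)
qed

context tree
begin

definition weighted_dist :: "'k set \<Rightarrow> ('k \<Rightarrow> real) \<Rightarrow> ('k \<Rightarrow> 'n) \<Rightarrow> 'n \<Rightarrow> real" where
  "weighted_dist K m pt x = (\<Sum>k\<in>K. m k * d (pt k) x)"

lemma weighted_dist_diff:
  "weighted_dist K m pt x - weighted_dist K m pt u = (\<Sum>k\<in>K. m k * (d (pt k) x - d (pt k) u))"
  unfolding weighted_dist_def by (simp add: sum_subtractf right_diff_distrib)

end

context rooted_tree
begin

lemma weighted_dist_child:
  assumes "tree_child E r u c" and "\<And>k. k \<in> K \<Longrightarrow> pt k \<in> L"
  shows "weighted_dist K m pt c - weighted_dist K m pt u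
    = len u c * (sum m K - 2 * weight_in K m pt (subtree c))"
  unfolding weighted_dist_diff sum_signed_weights[symmetric]
  using tree_dist_child_diff[OF assms(1)] assms(2) by (intro sum.cong) auto

lemma weighted_dist_child_less_iff:
  assumes child: "tree_child E r u c" and "\<And>k. k \<in> K \<Longrightarrow> pt k \<in> L"
  shows "weighted_dist K m pt c < weighted_dist K m pt u \<longleftrightarrow>
    sum m K < 2 * weight_in K m pt (subtree c)"
proof -
  have "0 < len u c"
    using child edge_len_pos unfolding tree_child_def by blast
  have "weighted_dist K m pt c < weighted_dist K m pt u
      \<longleftrightarrow> weighted_dist K m pt c - weighted_dist K m pt u < 0"
    by simp
  also have "\<dots> \<longleftrightarrow> len u c * (sum m K - 2 * weight_in K m pt (subtree c)) < 0"
    using weighted_dist_child[where K = K and m = m and pt = pt, OF assms] by simp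
  also have "\<dots> \<longleftrightarrow> sum m K < 2 * weight_in K m pt (subtree c)"
    using \<open>0 < len u c\<close> by (auto simp: mult_less_0_iff)
  finally show ?thesis .
qed

lemma weighted_dist_descendant:
  assumes "tree_child E r u c" "x \<in> subtree c"
    and "\<And>k. k \<in> K \<Longrightarrow> pt k \<in> L" "\<And>k. k \<in> K \<Longrightarrow> 0 \<le> m k"
  shows "d u x * (sum m K - 2 * weight_in K m pt (subtree c))
    \<le> weighted_dist K m pt x - weighted_dist K m pt u"
  unfolding weighted_dist_diff
  using assms tree_dist_descendant_diff by (intro sum_signed_weights_le) auto

lemma weighted_dist_outside:
  assumes "u \<in> L" "x \<in> L" "x \<notin> subtree u"
    and "\<And>k. k \<in> K \<Longrightarrow> pt k \<in> L" "\<And>k. k \<in> K \<Longrightarrow> 0 \<le> m k"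
  shows "d u x * (2 * weight_in K m pt (subtree u) - sum m K)
    \<le> weighted_dist K m pt x - weighted_dist K m pt u"
proof -
  have pointwise: "(if pt k \<in> subtree u then - (- d u x) else - d u x) \<le> d (pt k) x - d (pt k) u"
    if "k \<in> K" for k
    using tree_dist_outside_diff[OF assms(1-3) assms(4)[OF that]] by (auto split: if_splits)
  have "- d u x * (sum m K - 2 * weight_in K m pt (subtree u))
      \<le> weighted_dist K m pt x - weighted_dist K m pt u"
    unfolding weighted_dist_diff using assms(5) pointwise by (rule sum_signed_weights_le)
  then show ?thesis
    by (simp add: algebra_simps)
qed

lemma weighted_dist_median:
  assumes pts: "\<And>k. k \<in> K \<Longrightarrow> pt k \<in> L" and weights: "\<And>k. k \<in> K \<Longrightarrow> 0 \<le> m k"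
    and "u \<in> L" "x \<in> L"
    and heavy: "sum m K \<le> 2 * weight_in K m pt (subtree u)"
    and light: "\<And>c. tree_child E r u c \<Longrightarrow> 2 * weight_in K m pt (subtree c) \<le> sum m K"
  shows "weighted_dist K m pt u \<le> weighted_dist K m pt x"
proof -
  consider "x = u" | "x \<in> subtree u" "x \<noteq> u" | "x \<notin> subtree u"
    by blast
  then show ?thesis
  proof cases
    case 2
    then obtain c where "tree_child E r u c" "x \<in> subtree c"
      using subtree_descendant by blast
    then have "d u x * (sum m K - 2 * weight_in K m pt (subtree c))
        \<le> weighted_dist K m pt x - weighted_dist K m pt u"
      using weighted_dist_descendant pts weights by blast
    moreover have "0 \<le> d u x * (sum m K - 2 * weight_in K m pt (subtree c))"
      using light[OF \<open>tree_child E r u c\<close>] tree_dist_nonneg[OF \<open>u \<in> L\<close> \<open>x \<in> L\<close>] by simp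
    ultimately show ?thesis
      by simp
  next
    case 3
    then have "d u x * (2 * weight_in K m pt (subtree u) - sum m K)
        \<le> weighted_dist K m pt x - weighted_dist K m pt u"
      using weighted_dist_outside \<open>u \<in> L\<close> \<open>x \<in> L\<close> pts weights by blast
    moreover have "0 \<le> d u x * (2 * weight_in K m pt (subtree u) - sum m K)"
      using heavy tree_dist_nonneg[OF \<open>u \<in> L\<close> \<open>x \<in> L\<close>] by simp
    ultimately show ?thesis
      by simp
  qed simp
qed

end

section \<open>The preference game\<close>

locale preference_game = rooted_tree L E len r
  for L :: "'n set" and E len r +
  fixes V :: "'p set" and A :: "('p \<times> 'p) set" and w :: "'p \<Rightarrow> 'p \<Rightarrow> real"
    and pen :: "'p \<Rightarrow> 'n \<Rightarrow> real"
  assumes finite_players: "finite V"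
    and arcs_subset: "A \<subseteq> V \<times> V"
    and arc_weight_nonneg: "\<And>i j. (i, j) \<in> A \<Longrightarrow> 0 \<le> w i j"
    and penalty_nonneg: "\<And>i v. i \<in> V \<Longrightarrow> v \<in> L \<Longrightarrow> 0 \<le> pen i v"
begin

abbreviation step :: "('p \<Rightarrow> 'n) \<Rightarrow> ('p \<Rightarrow> 'n) \<Rightarrow> bool" where
  "step \<equiv> algo_step V L E len A w pen r"

abbreviation cost :: "'p \<Rightarrow> ('p \<Rightarrow> 'n) \<Rightarrow> real" where
  "cost \<equiv> game_cost L E len A w pen"

text \<open>Player i is attracted by mass pen i v at every node v (index Inl v) and by mass w i j at
  the node of every out-neighbour j (index Inr j).  A self-loop (i, i) only ever contributes
  w i i * d (z i) (z i) = 0, so it is dropped: then these masses do not depend on the position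
  of i herself.\<close>

definition neighbours :: "'p \<Rightarrow> 'p set" where
  "neighbours i = {j. (i, j) \<in> A} - {i}"

definition attractors :: "'p \<Rightarrow> ('n + 'p) set" where
  "attractors i = Inl ` L \<union> Inr ` neighbours i"

definition attraction :: "'p \<Rightarrow> 'n + 'p \<Rightarrow> real" where
  "attraction i = case_sum (pen i) (w i)"

definition attractor_node :: "('p \<Rightarrow> 'n) \<Rightarrow> 'n + 'p \<Rightarrow> 'n" where
  "attractor_node z = case_sum id z"

abbreviation response_cost :: "('p \<Rightarrow> 'n) \<Rightarrow> 'p \<Rightarrow> 'n \<Rightarrow> real" where
  "response_cost z i \<equiv> weighted_dist (attractors i) (attraction i) (attractor_node z)"

abbreviation mass_below :: "('p \<Rightarrow> 'n) \<Rightarrow> 'p \<Rightarrow> 'n \<Rightarrow> real" where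
  "mass_below z i q \<equiv> weight_in (attractors i) (attraction i) (attractor_node z) (subtree q)"

abbreviation total_mass :: "'p \<Rightarrow> real" where
  "total_mass i \<equiv> sum (attraction i) (attractors i)"

lemma neighbours_subset: "neighbours i \<subseteq> V"
  using arcs_subset unfolding neighbours_def by auto

lemma attractor_node_in:
  "\<forall>j\<in>V. z j \<in> L \<Longrightarrow> k \<in> attractors i \<Longrightarrow> attractor_node z k \<in> L"
  using neighbours_subset[of i] unfolding attractors_def attractor_node_def by auto

lemma attraction_nonneg: "i \<in> V \<Longrightarrow> k \<in> attractors i \<Longrightarrow> 0 \<le> attraction i k"
  using penalty_nonneg arc_weight_nonneg
  unfolding attractors_def attraction_def neighbours_def by auto

lemma game_cost_eq_response_cost:
  assumes profile: "\<forall>j\<in>V. z j \<in> L" and "x \<in> L"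
  shows "cost i (z(i := x)) = response_cost z i x"
proof -
  have "finite (neighbours i)"
    using neighbours_subset finite_players finite_subset by blast
  then have response: "response_cost z i x
      = (\<Sum>v\<in>L. pen i v * d v x) + (\<Sum>j\<in>neighbours i. w i j * d (z j) x)"
    unfolding weighted_dist_def attractors_def attraction_def attractor_node_def
    by (subst sum.union_disjoint) (auto simp: finite_nodes sum.reindex)
  have "(\<Sum>j | (i, j) \<in> A. w i j * d x ((z(i := x)) j))
      = (\<Sum>j\<in>neighbours i. w i j * d x ((z(i := x)) j))"
  proof (cases "(i, i) \<in> A")
    case True
    have "finite {j. (i, j) \<in> A}"
      using arcs_subset finite_players by (auto intro: finite_subset[of _ V])
    with True have "(\<Sum>j | (i, j) \<in> A. w i j * d x ((z(i := x)) j))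
        = w i i * d x x + (\<Sum>j\<in>neighbours i. w i j * d x ((z(i := x)) j))"
      unfolding neighbours_def by (subst sum.remove) auto
    then show ?thesis
      using tree_dist_refl[OF \<open>x \<in> L\<close>] by simp
  next
    case False
    then show ?thesis
      unfolding neighbours_def by (metis (mono_tags) Diff_insert0 Diff_empty mem_Collect_eq)
  qed
  also have "\<dots> = (\<Sum>j\<in>neighbours i. w i j * d (z j) x)"
    using neighbours_subset profile tree_dist_sym[OF _ \<open>x \<in> L\<close>]
    unfolding neighbours_def by (intro sum.cong) auto
  finally show ?thesis
    unfolding game_cost_def response
    using tree_dist_sym[OF \<open>x \<in> L\<close>] profile by simp
qed

lemma game_cost_eq_response_cost_self:
  "\<forall>j\<in>V. z j \<in> L \<Longrightarrow> i \<in> V \<Longrightarrow> cost i z = response_cost z i (z i)"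
  using game_cost_eq_response_cost[of z "z i" i] by simp

lemma improving_move_iff:
  assumes profile: "\<forall>j\<in>V. z j \<in> L" and "i \<in> V" and child: "tree_child E r (z i) c"
  shows "cost i (z(i := c)) < cost i z \<longleftrightarrow> total_mass i < 2 * mass_below z i c"
  using game_cost_eq_response_cost[OF profile tree_child_root_path(2)[OF child]]
    game_cost_eq_response_cost_self[OF profile \<open>i \<in> V\<close>]
    weighted_dist_child_less_iff[OF child attractor_node_in[OF profile]]
  by simp

lemma mass_below_own_move: "mass_below (z(i := c)) i q = mass_below z i q"
  unfolding weight_in_def attractors_def attractor_node_def neighbours_def
  by (intro sum.cong) auto

lemma mass_below_other_move:
  assumes "tree_child E r (z k) c"
  shows "mass_below z i q \<le> mass_below (z(k := c)) i q"
  unfolding weight_in_def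
proof (intro sum_mono)
  fix a
  assume "a \<in> attractors i"
  then show "(if attractor_node z a \<in> subtree q then attraction i a else 0)
      \<le> (if attractor_node (z(k := c)) a \<in> subtree q then attraction i a else 0)"
    using tree_child_in_subtree[OF assms] arc_weight_nonneg
    unfolding attractors_def attraction_def attractor_node_def neighbours_def
    by (auto split: if_splits)
qed

definition majority_below :: "('p \<Rightarrow> 'n) \<Rightarrow> bool" where
  "majority_below z \<longleftrightarrow> (\<forall>i\<in>V. z i \<in> L \<and> total_mass i \<le> 2 * mass_below z i (z i))"

definition depth_sum :: "('p \<Rightarrow> 'n) \<Rightarrow> nat" where
  "depth_sum z = (\<Sum>i\<in>V. length (tree_path r (z i)))"

lemma majority_below_root: "majority_below (\<lambda>_. r)"
proof -
  have "mass_below (\<lambda>_. r) i r = total_mass i" for i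
    using attractor_node_in[of "\<lambda>_. r"] root_node
    unfolding weight_in_def subtree_root by (intro sum.cong) auto
  moreover have "0 \<le> total_mass i" if "i \<in> V" for i
    using attraction_nonneg[OF that] by (rule sum_nonneg)
  ultimately show ?thesis
    unfolding majority_below_def using root_node by auto
qed

lemma depth_sum_root: "depth_sum (\<lambda>_. r) = card V"
  unfolding depth_sum_def using tree_path_refl[OF root_node] by simp

lemma step_majority_below:
  assumes inv: "majority_below z" and "step z z'"
  shows "majority_below z' \<and> depth_sum z' = Suc (depth_sum z)"
proof -
  obtain k c where k: "k \<in> V" and child: "tree_child E r (z k) c"
    and improving: "cost k (z(k := c)) < cost k z" and z': "z' = z(k := c)"
    using assms(2) unfolding algo_step_def by blast
  have profile: "\<forall>j\<in>V. z j \<in> L"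
    using inv unfolding majority_below_def by simp
  have "total_mass k < 2 * mass_below z' k c"
    using improving improving_move_iff[OF profile k child] z' mass_below_own_move by simp
  moreover have "total_mass i \<le> 2 * mass_below z' i (z i)" if "i \<in> V" for i
  proof -
    have "total_mass i \<le> 2 * mass_below z i (z i)"
      using inv that unfolding majority_below_def by blast
    then show ?thesis
      using mass_below_other_move[where z = z and k = k, OF child, of i "z i"] z' by simp
  qed
  ultimately have "majority_below z'"
    using profile tree_child_root_path(2)[OF child] z' unfolding majority_below_def by auto
  moreover have "depth_sum z' = Suc (depth_sum z)"
  proof -
    have "depth_sum z' = length (tree_path r c) + (\<Sum>i\<in>V - {k}. length (tree_path r (z' i)))"
      unfolding depth_sum_def
      using sum.remove[OF finite_players k, of "\<lambda>i. length (tree_path r (z' i))"] z' by simp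
    also have "\<dots> = Suc (length (tree_path r (z k))) + (\<Sum>i\<in>V - {k}. length (tree_path r (z i)))"
      using tree_child_root_path(3)[OF child] z' by simp
    also have "\<dots> = Suc (depth_sum z)"
      unfolding depth_sum_def
      using sum.remove[OF finite_players k, of "\<lambda>i. length (tree_path r (z i))"] by simp
    finally show ?thesis .
  qed
  ultimately show ?thesis
    by blast
qed

lemma reachable_majority_below:
  "(step ^^ n) (\<lambda>_. r) z \<Longrightarrow> majority_below z \<and> depth_sum z = card V + n"
proof (induction n arbitrary: z)
  case 0
  then show ?case
    using majority_below_root depth_sum_root by simp
next
  case (Suc n)
  from Suc.prems obtain y where y: "(step ^^ n) (\<lambda>_. r) y" and "step y z"
    by (rule relpowp_Suc_E)
  have "majority_below y" "depth_sum y = card V + n"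
    using Suc.IH[OF y] by simp_all
  then show ?case
    using step_majority_below[OF _ \<open>step y z\<close>] by simp
qed

lemma depth_sum_le: "majority_below z \<Longrightarrow> depth_sum z \<le> card V * card L"
  unfolding majority_below_def depth_sum_def
  using sum_bounded_above[of V "\<lambda>i. length (tree_path r (z i))" "card L"] length_root_path_le
  by simp

lemma terminal_pure_nash:
  assumes inv: "majority_below z" and terminal: "\<not> (\<exists>z'. step z z')"
  shows "pure_nash V L E len A w pen z"
proof -
  have profile: "\<forall>j\<in>V. z j \<in> L"
    using inv unfolding majority_below_def by simp
  have "cost i z \<le> cost i (z(i := x))" if "i \<in> V" "x \<in> L" for i x
  proof -
    have "2 * mass_below z i c \<le> total_mass i" if "tree_child E r (z i) c" for c
      using improving_move_iff[OF profile \<open>i \<in> V\<close> that] terminal \<open>i \<in> V\<close> that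
      unfolding algo_step_def by force
    then have "response_cost z i (z i) \<le> response_cost z i x"
      using inv \<open>i \<in> V\<close> \<open>x \<in> L\<close> attractor_node_in[OF profile] attraction_nonneg
      unfolding majority_below_def by (intro weighted_dist_median) auto
    then show ?thesis
      using game_cost_eq_response_cost[OF profile \<open>x \<in> L\<close>]
        game_cost_eq_response_cost_self[OF profile \<open>i \<in> V\<close>] by simp
  qed
  then show ?thesis
    unfolding pure_nash_def using profile by blast
qed

end

lemma terminal_reachable_if_bounded:
  assumes "\<And>n z. (R ^^ n) a z \<Longrightarrow> n \<le> B"
  shows "\<exists>z. R\<^sup>*\<^sup>* a z \<and> \<not> (\<exists>z'. R z z')"
proof (rule ccontr)
  assume "\<not> ?thesis"
  then have successor: "R\<^sup>*\<^sup>* a z \<Longrightarrow> \<exists>z'. R z z'" for z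
    by blast
  have "\<exists>z. (R ^^ n) a z" for n
  proof (induction n)
    case (Suc n)
    then obtain z z' where "(R ^^ n) a z" "R z z'"
      using successor relpowp_imp_rtranclp by metis
    then show ?case
      using relpowp_Suc_I by metis
  qed auto
  then obtain z where "(R ^^ Suc B) a z"
    by blast
  then show False
    using assms by fastforce
qed

theorem theorem3:
  fixes V :: "'p set" and A :: "('p \<times> 'p) set" and w :: "'p \<Rightarrow> 'p \<Rightarrow> real"
    and L :: "'n set" and E :: "('n \<times> 'n) set" and len :: "'n \<Rightarrow> 'n \<Rightarrow> real"
    and pen :: "'p \<Rightarrow> 'n \<Rightarrow> real" and r :: 'n
  assumes "finite V"
    and "A \<subseteq> V \<times> V"
    and "\<forall>i j. (i, j) \<in> A \<longrightarrow> w i j \<ge> 0"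
    and "weighted_tree L E len"
    and "\<forall>i\<in>V. \<forall>v\<in>L. pen i v \<ge> 0"
    and "r \<in> L"
  shows "(\<forall>n z. (algo_step V L E len A w pen r ^^ n) (\<lambda>_. r) z \<longrightarrow> n \<le> card V * card L)
       \<and> (\<forall>z. (algo_step V L E len A w pen r)\<^sup>*\<^sup>* (\<lambda>_. r) z \<and>
              \<not> (\<exists>z'. algo_step V L E len A w pen r z z') \<longrightarrow> pure_nash V L E len A w pen z)
       \<and> (\<exists>z. pure_nash V L E len A w pen z)"
proof -
  interpret preference_game L E len r V A w pen
    by unfold_locales (use assms in auto)
  have bounded: "n \<le> card V * card L" if "(step ^^ n) (\<lambda>_. r) z" for n z
    using reachable_majority_below[OF that] depth_sum_le by fastforce
  have nash: "pure_nash V L E len A w pen z"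
    if "step\<^sup>*\<^sup>* (\<lambda>_. r) z" "\<not> (\<exists>z'. step z z')" for z
    using that rtranclp_imp_relpowp reachable_majority_below terminal_pure_nash by metis
  have "\<exists>z. step\<^sup>*\<^sup>* (\<lambda>_. r) z \<and> \<not> (\<exists>z'. step z z')"
    by (rule terminal_reachable_if_bounded) (rule bounded)
  then show ?thesis
    using bounded nash by blast
qed

end
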